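(* Let $n\geq 3$ and let $C_n^*$ be the bigraded complex described in the context. Then \[\operatorname{gr}_{\mathcal{V}}\alpha_s^*\leq \operatorname{gr}_{\mathcal{V}}\alpha_n^*-2n\ \text{ for } 1\leq s\leq n-1,\qquad \operatorname{gr}_{\mathcal{V}}\widetilde{\alpha}_s^*\leq \operatorname{gr}_{\mathcal{V}}\alpha_n^*-2n\ \text{ for } 1\leq s\leq n-2,\] and \[\operatorname{gr}_{\mathcal{U}}\alpha_s^*\leq \operatorname{gr}_{\mathcal{U}}\alpha_n^*-2n\ \text{ for } n+1\leq s\leq 2n-1,\qquad \operatorname{gr}_{\mathcal{U}}\widetilde{\alpha}_s^*\leq \operatorname{gr}_{\mathcal{U}}\alpha_n^*-2n\ \text{ for } n+1\leq s\leq 2n-2.\]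
   Context: Let $\mathbb{F}=\mathbb{Z}/2$ and $R=\mathbb{F}[\mathcal{U},\mathcal{V}]$, bigraded by $(\operatorname{gr}_{\mathcal{U}},\operatorname{gr}_{\mathcal{V}})$ with $\mathcal{U}$ of bigrading $(-2,0)$ and $\mathcal{V}$ of bigrading $(0,-2)$. For $n\geq 3$, $C_n^*$ is the free $R$-module with basis $\alpha^*_s$ ($1\leq s\leq 2n-1$); $\widetilde{\alpha}^*_s$ ($1\leq s\leq n-2$ and $n+1\leq s\leq 2n-2$); $b^{*,(s)}_{n-1}$ ($1\leq s\leq n-2$); $b^{*,(s)}_{n}$ ($1\leq s\leq 2n-2$); $b^{*,(s)}_{n+1}$ ($n+1\leq s\leq 2n-2$), with $R$-linear differential $\partial$ given by $\partial\alpha^*_s=0$, $\partial\widetilde{\alpha}^*_s=0$, and $\partial b^{*,(s)}_{n-1}=\mathcal{U}^{n(n-1)/2}\mathcal{V}^{n(n-1)/2}\alpha^*_s+\mathcal{V}^{n-s-1}\widetilde{\alpha}^*_s$ for $1\leq s\leq n-2$; $\partial b^{*,(s)}_{n}=\mathcal{U}^{n(n+1)/2-s}\mathcal{V}^{n(n+1)/2}\alpha^*_{s+1}+\mathcal{U}^{n}\widetilde{\alpha}^*_s$ for $1\leq s\leq n-2$; $\partial b^{*,(s)}_{n}=\mathcal{U}^{n(n+1)/2}\mathcal{V}^{n(n-1)/2-n+s+1}\alpha^*_s+\mathcal{U}^{n(n+1)/2-s}\mathcal{V}^{n(n+1)/2}\alpha^*_{s+1}$ for $n-1\leq s\leq n$;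 $\partial b^{*,(s)}_{n}=\mathcal{U}^{n(n+1)/2}\mathcal{V}^{n(n-1)/2-n+s+1}\alpha^*_s+\mathcal{V}^{n}\widetilde{\alpha}^*_s$ for $n+1\leq s\leq 2n-2$; $\partial b^{*,(s)}_{n+1}=\mathcal{U}^{n(n-1)/2}\mathcal{V}^{n(n-1)/2}\alpha^*_{s+1}+\mathcal{U}^{s-n}\widetilde{\alpha}^*_s$ for $n+1\leq s\leq 2n-2$. The basis elements are assigned bigradings $(\operatorname{gr}_{\mathcal{U}},\operatorname{gr}_{\mathcal{V}})$ so that $\partial$ is homogeneous of bigrading $(-1,-1)$; such a bigrading is unique up to an overall shift, and any such choice is fixed. *)

theory Defs
  imports Main
begin

text \<open>Generators of the free R-module C_n^*, R = F_2[U,V].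
  Alpha s = alpha^*_s, AlphaT s = tilde-alpha^*_s,
  Bm s = b^{*,(s)}_{n-1}, B0 s = b^{*,(s)}_n, Bp s = b^{*,(s)}_{n+1}.\<close>
datatype gen = Alpha nat | AlphaT nat | Bm nat | B0 nat | Bp nat

fun in_basis :: "nat \<Rightarrow> gen \<Rightarrow> bool" where
  "in_basis n (Alpha s) = (1 \<le> s \<and> s \<le> 2*n - 1)"
| "in_basis n (AlphaT s) = ((1 \<le> s \<and> s \<le> n - 2) \<or> (n + 1 \<le> s \<and> s \<le> 2*n - 2))"
| "in_basis n (Bm s) = (1 \<le> s \<and> s \<le> n - 2)"
| "in_basis n (B0 s) = (1 \<le> s \<and> s \<le> 2*n - 2)"
| "in_basis n (Bp s) = (n + 1 \<le> s \<and> s \<le> 2*n - 2)"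

text \<open>The differential of a basis element, as the list of its monomial terms
  (a, b, x) standing for U^a V^b x (coefficients in F_2, all terms distinct).\<close>
fun dterms :: "nat \<Rightarrow> gen \<Rightarrow> (nat \<times> nat \<times> gen) list" where
  "dterms n (Alpha s) = []"
| "dterms n (AlphaT s) = []"
| "dterms n (Bm s) =
     [(n*(n-1) div 2, n*(n-1) div 2, Alpha s), (0, n - s - 1, AlphaT s)]"
| "dterms n (B0 s) =
     (if s \<le> n - 2 then
        [(n*(n+1) div 2 - s, n*(n+1) div 2, Alpha (s+1)), (n, 0, AlphaT s)]
      else if s \<le> n then
        [(n*(n+1) div 2, n*(n-1) div 2 + s + 1 - n, Alpha s),
         (n*(n+1) div 2 - s, n*(n+1) div 2, Alpha (s+1))]
      else
        [(n*(n+1) div 2, n*(n-1) div 2 + s + 1 - n, Alpha s), (0, n, AlphaT s)])"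
| "dterms n (Bp s) =
     [(n*(n-1) div 2, n*(n-1) div 2, Alpha (s+1)), (s - n, 0, AlphaT s)]"

text \<open>A bigrading (grU, grV) of the basis (U has bigrading (-2,0), V has (0,-2))
  for which the differential is homogeneous of bigrading (-1,-1).\<close>
definition valid_bigrading :: "nat \<Rightarrow> (gen \<Rightarrow> int) \<Rightarrow> (gen \<Rightarrow> int) \<Rightarrow> bool" where
  "valid_bigrading n grU grV \<longleftrightarrow>
     (\<forall>g. in_basis n g \<longrightarrow> (\<forall>(a, b, x) \<in> set (dterms n g).
         grU x - 2 * int a = grU g - 1 \<and> grV x - 2 * int b = grV g - 1))"

end

theory Submission
  imports Defs
begin

text \<open>Homogeneity of the differential forces the two monomials of every \<open>\<partial>b\<close> to have the
  same bigrading, so each generator b yields a linear relation between the gradings of the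
  \<open>\<alpha>\<close>'s. From b_n^(n-1) and b_n^(n) one gets gr_V \<open>\<alpha>\<close>_n = gr_V \<open>\<alpha>\<close>_(n-1) + 2n and
  gr_U \<open>\<alpha>\<close>_n = gr_U \<open>\<alpha>\<close>_(n+1) + 2n. Eliminating \<open>\<alpha>\<close>~_s between b_(n-1)^(s) and b_n^(s)
  (resp. b_n^(s) and b_(n+1)^(s)) shows that gr_V \<open>\<alpha>\<close>_s increases for s < n and
  gr_U \<open>\<alpha>\<close>_s decreases for s > n, while \<open>\<alpha>\<close>~_s lies n(n+1) below its neighbouring \<open>\<alpha>\<close>.\<close>

lemma int_triangular_Suc: "int (n * (n + 1) div 2) = int (n * (n - 1) div 2) + int n"
proof -
  have "n * (n + 1) = n * (n - 1) + n * 2" by (cases n) (auto simp: algebra_simps)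
  then show ?thesis by simp
qed

lemma int_triangular_double: "2 * int (n * (n + 1) div 2) = int (n * (n + 1))"
proof -
  have "2 * (n * (n + 1) div 2) = n * (n + 1)" by simp
  then show ?thesis by (metis of_nat_mult of_nat_numeral)
qed

lemma valid_bigrading_dterms_eq:
  assumes "valid_bigrading n grU grV" "in_basis n g"
    and "(a, b, x) \<in> set (dterms n g)" "(a', b', y) \<in> set (dterms n g)"
  shows "grU x - 2 * int a = grU y - 2 * int a'"
    and "grV x - 2 * int b = grV y - 2 * int b'"
proof -
  have "grU z - 2 * int c = grU g - 1 \<and> grV z - 2 * int d = grV g - 1"
    if "(c, d, z) \<in> set (dterms n g)" for c d z
    using assms(1,2) that unfolding valid_bigrading_def by fastforce
  from this[OF assms(3)] this[OF assms(4)]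
  show "grU x - 2 * int a = grU y - 2 * int a'" "grV x - 2 * int b = grV y - 2 * int b'"
    by simp_all
qed

lemma grV_AlphaT_eq:
  assumes "valid_bigrading n grU grV" "1 \<le> s" "s \<le> n - 2"
  shows "grV (AlphaT s) = grV (Alpha (Suc s)) - int (n * (n + 1))"
proof -
  have "grV (Alpha (Suc s)) - 2 * int (n * (n + 1) div 2) = grV (AlphaT s)"
    using valid_bigrading_dterms_eq(2)[OF assms(1), of "B0 s"
        "n * (n + 1) div 2 - s" "n * (n + 1) div 2" "Alpha (Suc s)" n 0 "AlphaT s"] assms
    by simp
  with int_triangular_double[of n] show ?thesis by simp
qed

lemma grV_Alpha_Suc_eq:
  assumes "valid_bigrading n grU grV" "1 \<le> s" "s \<le> n - 2"
  shows "grV (Alpha (Suc s)) = grV (Alpha s) + 2 * int (2 * n - s - 1)"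
proof -
  let ?M = "n * (n - 1) div 2"
  have "grV (Alpha s) - 2 * int ?M = grV (AlphaT s) - 2 * int (n - s - 1)"
    using valid_bigrading_dterms_eq(2)[OF assms(1), of "Bm s"
        ?M ?M "Alpha s" 0 "n - s - 1" "AlphaT s"] assms by simp
  moreover have "int (2 * n - s - 1) = int n + int (n - s - 1)" using assms(3) by simp
  ultimately show ?thesis
    using grV_AlphaT_eq[OF assms] int_triangular_double[of n] int_triangular_Suc[of n] by linarith
qed

lemma grV_Alpha_n_eq:
  assumes "valid_bigrading n grU grV" "n \<ge> 2"
  shows "grV (Alpha n) = grV (Alpha (n - 1)) + 2 * int n"
proof -
  obtain m where m: "n = Suc m" "m \<ge> 1" using assms(2) by (cases n) auto
  let ?N = "n * (n + 1) div 2" and ?M = "n * (n - 1) div 2"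
  have "dterms n (B0 m) = [(?N, ?M, Alpha m), (?N - m, ?N, Alpha n)]"
    using m by simp
  then have "grV (Alpha m) - 2 * int ?M = grV (Alpha n) - 2 * int ?N"
    using valid_bigrading_dterms_eq(2)[OF assms(1), of "B0 m"
        ?N ?M "Alpha m" "?N - m" ?N "Alpha n"] m by simp
  with int_triangular_Suc[of n] m(1) show ?thesis by simp
qed

lemma grU_AlphaT_eq:
  assumes "valid_bigrading n grU grV" "n + 1 \<le> s" "s \<le> 2 * n - 2"
  shows "grU (AlphaT s) = grU (Alpha s) - int (n * (n + 1))"
proof -
  let ?N = "n * (n + 1) div 2" and ?M = "n * (n - 1) div 2"
  have "dterms n (B0 s) = [(?N, ?M + s + 1 - n, Alpha s), (0, n, AlphaT s)]"
    using assms(2) by simp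
  then have "grU (Alpha s) - 2 * int ?N = grU (AlphaT s)"
    using valid_bigrading_dterms_eq(1)[OF assms(1), of "B0 s"
        ?N "?M + s + 1 - n" "Alpha s" 0 n "AlphaT s"] assms by simp
  with int_triangular_double[of n] show ?thesis by simp
qed

lemma grU_Alpha_Suc_eq:
  assumes "valid_bigrading n grU grV" "n + 1 \<le> s" "s \<le> 2 * n - 2"
  shows "grU (Alpha s) = grU (Alpha (Suc s)) + 2 * int s"
proof -
  let ?M = "n * (n - 1) div 2"
  have "grU (Alpha (Suc s)) - 2 * int ?M = grU (AlphaT s) - 2 * int (s - n)"
    using valid_bigrading_dterms_eq(1)[OF assms(1), of "Bp s"
        ?M ?M "Alpha (Suc s)" "s - n" 0 "AlphaT s"] assms by simp
  moreover have "int s = int n + int (s - n)" using assms(2) by simp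
  ultimately show ?thesis
    using grU_AlphaT_eq[OF assms] int_triangular_double[of n] int_triangular_Suc[of n] by linarith
qed

lemma grU_Alpha_n_eq:
  assumes "valid_bigrading n grU grV" "n \<ge> 2"
  shows "grU (Alpha n) = grU (Alpha (n + 1)) + 2 * int n"
proof -
  let ?N = "n * (n + 1) div 2" and ?M = "n * (n - 1) div 2"
  have "dterms n (B0 n) = [(?N, ?M + 1, Alpha n), (?N - n, ?N, Alpha (n + 1))]"
    using assms(2) by simp
  then have "grU (Alpha n) - 2 * int ?N = grU (Alpha (n + 1)) - 2 * int (?N - n)"
    using valid_bigrading_dterms_eq(1)[OF assms(1), of "B0 n"
        ?N "?M + 1" "Alpha n" "?N - n" ?N "Alpha (n + 1)"] assms(2) by simp
  moreover have "int (?N - n) = int ?M" using int_triangular_Suc[of n] by simp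
  ultimately show ?thesis using int_triangular_Suc[of n] by linarith
qed

lemma grV_Alpha_le_pred_n:
  assumes "valid_bigrading n grU grV" "1 \<le> s" "s \<le> n - 1"
  shows "grV (Alpha s) \<le> grV (Alpha (n - 1))"
proof (rule lift_Suc_mono_le_ivl[where f = "\<lambda>s. grV (Alpha s)" and N = "{1..n - 2}"])
  fix m assume "m \<in> {1..n - 2}"
  then have "grV (Alpha (Suc m)) = grV (Alpha m) + 2 * int (2 * n - m - 1)"
    by (intro grV_Alpha_Suc_eq[OF assms(1)]) auto
  then show "grV (Alpha m) \<le> grV (Alpha (Suc m))" by linarith
qed (use assms in auto)

lemma grU_Alpha_le_Suc_n:
  assumes "valid_bigrading n grU grV" "n + 1 \<le> s" "s \<le> 2 * n - 1"
  shows "grU (Alpha s) \<le> grU (Alpha (n + 1))"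
proof (rule lift_Suc_antimono_le_ivl[where f = "\<lambda>s. grU (Alpha s)" and N = "{n + 1..2 * n - 2}"])
  fix m assume "m \<in> {n + 1..2 * n - 2}"
  then have "grU (Alpha m) = grU (Alpha (Suc m)) + 2 * int m"
    by (intro grU_Alpha_Suc_eq[OF assms(1)]) auto
  then show "grU (Alpha (Suc m)) \<le> grU (Alpha m)" by linarith
qed (use assms in auto)

theorem lemma2p8:
  fixes n :: nat and grU grV :: "gen \<Rightarrow> int"
  assumes "n \<ge> 3"
    and "valid_bigrading n grU grV"
  shows "(\<forall>s. 1 \<le> s \<and> s \<le> n - 1 \<longrightarrow> grV (Alpha s) \<le> grV (Alpha n) - 2 * int n)
       \<and> (\<forall>s. 1 \<le> s \<and> s \<le> n - 2 \<longrightarrow> grV (AlphaT s) \<le> grV (Alpha n) - 2 * int n)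
       \<and> (\<forall>s. n + 1 \<le> s \<and> s \<le> 2*n - 1 \<longrightarrow> grU (Alpha s) \<le> grU (Alpha n) - 2 * int n)
       \<and> (\<forall>s. n + 1 \<le> s \<and> s \<le> 2*n - 2 \<longrightarrow> grU (AlphaT s) \<le> grU (Alpha n) - 2 * int n)"
proof -
  have "n \<ge> 2" using assms(1) by simp
  have "2 * n \<le> n * (n + 1)" using mult_le_mono2[of 2 "n + 1" n] assms(1) by simp
  then have gap: "2 * int n \<le> int (n * (n + 1))" by linarith
  have V: "grV (Alpha s) \<le> grV (Alpha n) - 2 * int n" if "1 \<le> s" "s \<le> n - 1" for s
    using grV_Alpha_le_pred_n[OF assms(2) that] grV_Alpha_n_eq[OF assms(2) \<open>n \<ge> 2\<close>] by linarith
  have VT: "grV (AlphaT s) \<le> grV (Alpha n) - 2 * int n" if "1 \<le> s" "s \<le> n - 2" for s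
    using grV_AlphaT_eq[OF assms(2) that] V[of "Suc s"] gap that by linarith
  have U: "grU (Alpha s) \<le> grU (Alpha n) - 2 * int n" if "n + 1 \<le> s" "s \<le> 2 * n - 1" for s
    using grU_Alpha_le_Suc_n[OF assms(2) that] grU_Alpha_n_eq[OF assms(2) \<open>n \<ge> 2\<close>] by linarith
  have UT: "grU (AlphaT s) \<le> grU (Alpha n) - 2 * int n" if "n + 1 \<le> s" "s \<le> 2 * n - 2" for s
    using grU_AlphaT_eq[OF assms(2) that] U[of s] gap that by linarith
  show ?thesis using V VT U UT by blast
qed

end
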